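(* Let $k\geq 2$ and let $G$ be a bipartite graph of order $n\geq 11k-4$ that does not contain $k\cdot P_3$ as a subgraph. Then $\rho(G)\leq \sqrt{(k-1)(n-k+1)}$, with equality if and only if $G=K_{k-1,n-k+1}$.
   Context: Graphs are finite and simple; $\rho(G)$ is the largest eigenvalue of the adjacency matrix of $G$. $P_3$ is the path on 3 vertices and $k\cdot P_3$ is the disjoint union of $k$ copies of $P_3$. $K_{a,b}$ is the complete bipartite graph with parts of sizes $a$ and $b$. *)

theory Defs
  imports Complex_Main
begin

definition simple_graph :: "nat \<Rightarrow> (nat \<Rightarrow> nat \<Rightarrow> bool) \<Rightarrow> bool" where
  "simple_graph n E \<longleftrightarrow>
     (\<forall>u v. E u v \<longrightarrow> u < n \<and> v < n \<and> u \<noteq> v \<and> E v u)"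

definition adj :: "(nat \<Rightarrow> nat \<Rightarrow> bool) \<Rightarrow> nat \<Rightarrow> nat \<Rightarrow> real" where
  "adj E i j = (if E i j then 1 else 0)"

definition adj_eigenvalue :: "nat \<Rightarrow> (nat \<Rightarrow> nat \<Rightarrow> bool) \<Rightarrow> real \<Rightarrow> bool" where
  "adj_eigenvalue n E lam \<longleftrightarrow>
     (\<exists>x :: nat \<Rightarrow> real. (\<exists>i<n. x i \<noteq> 0) \<and>
        (\<forall>i<n. (\<Sum>j<n. adj E i j * x j) = lam * x i))"

definition spec_radius :: "nat \<Rightarrow> (nat \<Rightarrow> nat \<Rightarrow> bool) \<Rightarrow> real" where
  "spec_radius n E = Max {lam. adj_eigenvalue n E lam}"

definition bipartite_graph :: "(nat \<Rightarrow> nat \<Rightarrow> bool) \<Rightarrow> bool" where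
  "bipartite_graph E \<longleftrightarrow> (\<exists>c :: nat \<Rightarrow> bool. \<forall>u v. E u v \<longrightarrow> c u \<noteq> c v)"

text \<open>G contains k disjoint copies of P_3 as a (not necessarily induced) subgraph:
  vertices p i 0 - p i 1 - p i 2 for i < k, all 3k of them distinct.\<close>
definition contains_kP3 :: "nat \<Rightarrow> nat \<Rightarrow> (nat \<Rightarrow> nat \<Rightarrow> bool) \<Rightarrow> bool" where
  "contains_kP3 k n E \<longleftrightarrow>
     (\<exists>p :: nat \<Rightarrow> nat \<Rightarrow> nat.
        inj_on (\<lambda>(i, j). p i j) ({..<k} \<times> {..<3}) \<and>
        (\<forall>i<k. \<forall>j<3. p i j < n) \<and>
        (\<forall>i<k. E (p i 0) (p i 1) \<and> E (p i 1) (p i 2)))"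

definition is_complete_bipartite :: "nat \<Rightarrow> nat \<Rightarrow> nat \<Rightarrow> (nat \<Rightarrow> nat \<Rightarrow> bool) \<Rightarrow> bool" where
  "is_complete_bipartite a b n E \<longleftrightarrow>
     (\<exists>S. S \<subseteq> {..<n} \<and> card S = a \<and> card ({..<n} - S) = b \<and>
        (\<forall>u v. E u v \<longleftrightarrow> (u < n \<and> v < n \<and> (u \<in> S \<longleftrightarrow> v \<notin> S))))"

end

(*
  Let G be bipartite with colour classes X and Y, and let x be an eigenvector for an eigenvalue
  lambda <> 0. Then sum_X x^2 = sum_Y x^2, and Cauchy-Schwarz on row i of the eigenvalue equation
  gives lambda^2 x_i^2 <= d_i * sum_(j ~ i) x_j^2 <= d_i * sum_Y x^2 for i in X; summing over X
  yields lambda^2 <= e(G), with equality only if G is complete bipartite on the support of x.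

  A bipartite graph on n >= 11k - 4 vertices without k disjoint copies of P3 has at most
  (k - 1)(n - k + 1) edges. In the step from k to k + 1, a vertex v
  of degree >= 2k + 2 can be added to every packing of k paths in G - v, so G - v has no such
  packing; if deg v <= n - k, deleting v gives the bound, and otherwise the colour class of v has
  fewer than k vertices. If all degrees are <= 2k + 1, one deletes a copy of P3 instead.

  In the equality case G is K_(s,t) plus isolated vertices with s t = (k - 1)(n - k + 1). Since
  K_(s,t) contains k disjoint P3 as soon as s, t >= k and s + t >= 3k, this forces
  {s, t} = {k - 1, n - k + 1}.
*)
theory Submission
  imports Defs "Jordan_Normal_Form.Spectral_Radius" "HOL-Analysis.Convex"
begin

section \<open>Real eigenvalues of the adjacency matrix\<close>

definition adj_mat :: "nat \<Rightarrow> (nat \<Rightarrow> nat \<Rightarrow> bool) \<Rightarrow> real mat" where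
  "adj_mat n E = mat n n (\<lambda>(i, j). adj E i j)"

lemma adj_eigenvalue_imp_eigenvalue:
  assumes "adj_eigenvalue n E lam"
  shows "eigenvalue (adj_mat n E) lam"
proof -
  from assms obtain x where x0: "\<exists>i<n. x i \<noteq> 0"
    and ev: "\<forall>i<n. (\<Sum>j<n. adj E i j * x j) = lam * x i"
    unfolding adj_eigenvalue_def by blast
  define v where "v = vec n x"
  have "v \<noteq> 0\<^sub>v n" using x0 unfolding v_def by (metis index_vec index_zero_vec(1))
  moreover have "adj_mat n E *\<^sub>v v = lam \<cdot>\<^sub>v v"
  proof (rule eq_vecI)
    fix i assume "i < dim_vec (lam \<cdot>\<^sub>v v)"
    hence i: "i < n" by (simp add: v_def)
    have "(adj_mat n E *\<^sub>v v) $ i = (\<Sum>j<n. adj E i j * x j)"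
      using i by (simp add: adj_mat_def v_def scalar_prod_def lessThan_atLeast0)
    also have "\<dots> = lam * x i" using ev i by blast
    finally show "(adj_mat n E *\<^sub>v v) $ i = (lam \<cdot>\<^sub>v v) $ i" using i by (simp add: v_def)
  qed (simp add: adj_mat_def v_def)
  ultimately show ?thesis
    unfolding eigenvalue_def eigenvector_def by (intro exI[of _ v]) (simp add: adj_mat_def v_def)
qed

lemma finite_adj_eigenvalues: "finite {lam. adj_eigenvalue n E lam}"
proof -
  have "adj_mat n E \<in> carrier_mat n n" by (simp add: adj_mat_def)
  from card_finite_spectrum(1)[OF this] show ?thesis
    by (rule finite_subset[rotated]) (auto simp: spectrum_def adj_eigenvalue_imp_eigenvalue)
qed

lemma symmetric_form_swap:
  fixes A :: "nat \<Rightarrow> nat \<Rightarrow> real" and z :: "nat \<Rightarrow> complex"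
  assumes sym: "\<And>i j. A i j = A j i"
  shows "(\<Sum>i<n. cnj (z i) * (\<Sum>j<n. of_real (A i j) * z j))
       = (\<Sum>j<n. z j * (\<Sum>i<n. of_real (A j i) * cnj (z i)))"
proof -
  have "(\<Sum>i<n. cnj (z i) * (\<Sum>j<n. of_real (A i j) * z j))
      = (\<Sum>i<n. \<Sum>j<n. of_real (A i j) * cnj (z i) * z j)"
    by (simp add: sum_distrib_left mult_ac)
  also have "\<dots> = (\<Sum>j<n. \<Sum>i<n. of_real (A i j) * cnj (z i) * z j)"
    by (rule sum.swap)
  also have "\<dots> = (\<Sum>j<n. z j * (\<Sum>i<n. of_real (A j i) * cnj (z i)))"
    by (simp add: sum_distrib_left mult_ac sym)
  finally show ?thesis .
qed

lemma symmetric_eigenvalue_real: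
  fixes A :: "nat \<Rightarrow> nat \<Rightarrow> real" and z :: "nat \<Rightarrow> complex"
  assumes sym: "\<And>i j. A i j = A j i" and i0: "i0 < n" "z i0 \<noteq> 0"
    and ev: "\<And>i. i < n \<Longrightarrow> (\<Sum>j<n. of_real (A i j) * z j) = mu * z i"
  shows "Im mu = 0"
proof -
  define S where "S = (\<Sum>i<n. cnj (z i) * z i)"
  have "(\<Sum>i<n. cnj (z i) * (\<Sum>j<n. of_real (A i j) * z j))
      = (\<Sum>j<n. z j * (\<Sum>i<n. of_real (A j i) * cnj (z i)))"
    by (rule symmetric_form_swap[OF sym])
  moreover have "(\<Sum>i<n. cnj (z i) * (\<Sum>j<n. of_real (A i j) * z j)) = mu * S"
  proof -
    have "(\<Sum>i<n. cnj (z i) * (\<Sum>j<n. of_real (A i j) * z j)) = (\<Sum>i<n. cnj (z i) * (mu * z i))"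
      by (rule sum.cong) (simp_all add: ev)
    thus ?thesis unfolding S_def by (simp add: sum_distrib_left mult_ac)
  qed
  moreover have "(\<Sum>j<n. z j * (\<Sum>i<n. of_real (A j i) * cnj (z i))) = cnj mu * S"
  proof -
    have "(\<Sum>i<n. of_real (A j i) * cnj (z i)) = cnj mu * cnj (z j)" if "j < n" for j
      using arg_cong[OF ev[OF that], of cnj] by (simp add: cnj_sum)
    hence "(\<Sum>j<n. z j * (\<Sum>i<n. of_real (A j i) * cnj (z i))) = (\<Sum>j<n. z j * (cnj mu * cnj (z j)))"
      by (intro sum.cong) simp_all
    thus ?thesis unfolding S_def by (simp add: sum_distrib_left mult_ac)
  qed
  moreover have "S \<noteq> 0"
  proof -
    have "Re S = (\<Sum>i<n. (Re (z i))\<^sup>2 + (Im (z i))\<^sup>2)"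
      unfolding S_def by (simp add: power2_eq_square sum.distrib)
    also have "\<dots> > 0"
      using i0 by (intro sum_pos2[of _ i0]) (auto simp: cmod_power2[symmetric])
    finally show ?thesis by auto
  qed
  ultimately have "mu = cnj mu" by simp
  thus ?thesis by (metis cnj.simps(2) complex.expand neg_equal_zero)
qed

lemma adj_eigenvalue_exists:
  assumes n: "n > 0" and sym: "\<And>u v. E u v \<Longrightarrow> E v u"
  shows "\<exists>lam. adj_eigenvalue n E lam"
proof -
  define C where "C = map_mat complex_of_real (adj_mat n E)"
  have C: "C \<in> carrier_mat n n" by (simp add: C_def adj_mat_def)
  from spectrum_non_empty[OF C n] obtain mu where "eigenvalue C mu"
    unfolding spectrum_def by auto
  then obtain v where v: "v \<in> carrier_vec n" "v \<noteq> 0\<^sub>v n" "C *\<^sub>v v = mu \<cdot>\<^sub>v v"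
    unfolding eigenvalue_def eigenvector_def using C by auto
  define z where "z i = v $ i" for i
  have ev: "(\<Sum>j<n. complex_of_real (adj E i j) * z j) = mu * z i" if i: "i < n" for i
  proof -
    have "(C *\<^sub>v v) $ i = (mu \<cdot>\<^sub>v v) $ i" using v(3) by simp
    thus ?thesis using i v(1) by (simp add: C_def adj_mat_def z_def scalar_prod_def lessThan_atLeast0)
  qed
  obtain i0 where i0: "i0 < n" "z i0 \<noteq> 0"
    using v(1,2) unfolding z_def by (metis carrier_vecD eq_vecI index_zero_vec(1,2))
  have "Im mu = 0"
    by (rule symmetric_eigenvalue_real[OF _ i0 ev]) (use sym in \<open>auto simp: adj_def\<close>)
  have re: "(\<Sum>j<n. adj E i j * Re (z j)) = Re mu * Re (z i)"
    and im: "(\<Sum>j<n. adj E i j * Im (z j)) = Re mu * Im (z i)" if "i < n" for i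
    using arg_cong[OF ev[OF that], of Re] arg_cong[OF ev[OF that], of Im] \<open>Im mu = 0\<close>
    by simp_all
  show ?thesis
  proof (cases "Re (z i0) = 0")
    case True
    hence "Im (z i0) \<noteq> 0" using i0 complex.expand by auto
    thus ?thesis unfolding adj_eigenvalue_def using im i0
      by (intro exI[of _ "Re mu"] exI[of _ "\<lambda>j. Im (z j)"]) auto
  next
    case False
    thus ?thesis unfolding adj_eigenvalue_def using re i0
      by (intro exI[of _ "Re mu"] exI[of _ "\<lambda>j. Re (z j)"]) auto
  qed
qed

lemma spec_radius_adj_eigenvalue:
  assumes "n > 0" and "\<And>u v. E u v \<Longrightarrow> E v u"
  shows "adj_eigenvalue n E (spec_radius n E)"
  using Max_in[OF finite_adj_eigenvalues] adj_eigenvalue_exists[OF assms]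
  unfolding spec_radius_def by auto

lemma adj_eigenvalue_le_spec_radius:
  "adj_eigenvalue n E lam \<Longrightarrow> lam \<le> spec_radius n E"
  unfolding spec_radius_def by (rule Max_ge[OF finite_adj_eigenvalues]) simp

section \<open>Degrees\<close>

definition vertex_degree :: "nat set \<Rightarrow> (nat \<Rightarrow> nat \<Rightarrow> bool) \<Rightarrow> nat \<Rightarrow> nat" where
  "vertex_degree V E u = card {w \<in> V. E u w}"

text \<open>\<^term>\<open>degree_sum V E\<close> is twice the number of edges of the subgraph induced by \<^term>\<open>V\<close>.\<close>

definition degree_sum :: "nat set \<Rightarrow> (nat \<Rightarrow> nat \<Rightarrow> bool) \<Rightarrow> nat" where
  "degree_sum V E = (\<Sum>u\<in>V. vertex_degree V E u)"

lemma vertex_degree_eq_sum: "finite V \<Longrightarrow> vertex_degree V E u = (\<Sum>w\<in>V. if E u w then 1 else 0)"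
  unfolding vertex_degree_def by (simp add: sum.If_cases Int_def)

lemma degree_sum_le_card:
  "finite V \<Longrightarrow> (\<And>u. u \<in> V \<Longrightarrow> vertex_degree V E u \<le> 1) \<Longrightarrow> degree_sum V E \<le> card V"
  unfolding degree_sum_def using sum_bounded_above[of V "vertex_degree V E" 1] by simp

lemma degree_sum_remove:
  assumes fin: "finite V" and Q: "Q \<subseteq> V" and sym: "\<And>u w. E u w \<Longrightarrow> E w u"
  shows "degree_sum V E \<le> degree_sum (V - Q) E + 2 * (\<Sum>q\<in>Q. vertex_degree V E q)"
proof -
  define ind where "ind u w = (if E u w then 1 else 0 :: nat)" for u w
  have finQ: "finite Q" using fin Q finite_subset by blast
  have VQ: "V = (V - Q) \<union> Q" using Q by auto
  have dV: "vertex_degree V E u = (\<Sum>w\<in>V - Q. ind u w) + (\<Sum>w\<in>Q. ind u w)" for u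
    unfolding vertex_degree_eq_sum[OF fin] ind_def
    by (subst VQ) (rule sum.union_disjoint, use fin finQ in auto)
  have "degree_sum V E = (\<Sum>u\<in>V - Q. vertex_degree V E u) + (\<Sum>u\<in>Q. vertex_degree V E u)"
    unfolding degree_sum_def by (subst VQ) (rule sum.union_disjoint, use fin finQ in auto)
  also have "(\<Sum>u\<in>V - Q. vertex_degree V E u) = degree_sum (V - Q) E + (\<Sum>u\<in>V - Q. \<Sum>w\<in>Q. ind u w)"
    unfolding degree_sum_def dV by (simp add: sum.distrib vertex_degree_eq_sum fin ind_def)
  also have "(\<Sum>u\<in>V - Q. \<Sum>w\<in>Q. ind u w) = (\<Sum>w\<in>Q. \<Sum>u\<in>V - Q. ind w u)"
    by (subst sum.swap) (use sym in \<open>auto intro!: sum.cong simp: ind_def\<close>)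
  also have "\<dots> \<le> (\<Sum>w\<in>Q. vertex_degree V E w)"
  proof (rule sum_mono)
    fix w assume "w \<in> Q"
    have "(\<Sum>u\<in>V - Q. ind w u) \<le> (\<Sum>u\<in>V. ind w u)"
      by (rule sum_mono2) (use fin in auto)
    thus "(\<Sum>u\<in>V - Q. ind w u) \<le> vertex_degree V E w" by (simp add: vertex_degree_eq_sum[OF fin] ind_def)
  qed
  finally show ?thesis by simp
qed

lemma degree_sum_bipartite_le:
  assumes fin: "finite V" and col: "\<And>u w. E u w \<Longrightarrow> c u \<noteq> c w"
  shows "degree_sum V E \<le> 2 * card {v \<in> V. c v} * card {v \<in> V. \<not> c v}"
proof -
  let ?X = "{v \<in> V. c v}" and ?Y = "{v \<in> V. \<not> c v}"
  have VXY: "V = ?X \<union> ?Y" by auto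
  have "degree_sum V E = (\<Sum>u\<in>?X. vertex_degree V E u) + (\<Sum>u\<in>?Y. vertex_degree V E u)"
    unfolding degree_sum_def by (subst VXY) (rule sum.union_disjoint, use fin in auto)
  also have "(\<Sum>u\<in>?X. vertex_degree V E u) \<le> card ?X * card ?Y"
  proof -
    have "\<And>u. u \<in> ?X \<Longrightarrow> vertex_degree V E u \<le> card ?Y"
      unfolding vertex_degree_def by (rule card_mono) (use fin col in auto)
    thus ?thesis using sum_bounded_above[of ?X "vertex_degree V E" "card ?Y"] by simp
  qed
  also have "(\<Sum>u\<in>?Y. vertex_degree V E u) \<le> card ?Y * card ?X"
  proof -
    have "\<And>u. u \<in> ?Y \<Longrightarrow> vertex_degree V E u \<le> card ?X"
      unfolding vertex_degree_def by (rule card_mono) (use fin col in auto)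
    thus ?thesis using sum_bounded_above[of ?Y "vertex_degree V E" "card ?X"] by simp
  qed
  finally show ?thesis by (simp add: algebra_simps)
qed

lemma degree_sum_complete_bipartite_on:
  assumes fin: "finite V" and P: "P \<subseteq> V"
    and EP: "\<And>u v. E u v \<longleftrightarrow> u \<in> P \<and> v \<in> P \<and> c u \<noteq> c v"
  shows "degree_sum V E = 2 * card {i \<in> P. c i} * card {i \<in> P. \<not> c i}"
proof -
  let ?X = "{i \<in> P. c i}" and ?Y = "{i \<in> P. \<not> c i}"
  have "{w \<in> V. E u w} = (if u \<in> P then (if c u then ?Y else ?X) else {})" for u
    using EP P by auto
  hence deg: "vertex_degree V E u = (if u \<in> ?X then card ?Y else if u \<in> ?Y then card ?X else 0)" for u
    unfolding vertex_degree_def by auto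
  have "degree_sum V E = (\<Sum>u\<in>V. if u \<in> ?X then card ?Y else 0) + (\<Sum>u\<in>V. if u \<in> ?Y then card ?X else 0)"
    unfolding degree_sum_def deg by (subst sum.distrib[symmetric]) (rule sum.cong, auto)
  also have "\<dots> = card ?X * card ?Y + card ?Y * card ?X"
    using fin P by (simp add: sum.If_cases Int_absorb1 subset_iff)
  finally show ?thesis by simp
qed

section \<open>Vertex-disjoint paths on three vertices\<close>

definition has_P3_packing :: "nat set \<Rightarrow> (nat \<Rightarrow> nat \<Rightarrow> bool) \<Rightarrow> nat \<Rightarrow> bool" where
  "has_P3_packing V E k \<longleftrightarrow> (\<exists>p :: nat \<Rightarrow> nat \<Rightarrow> nat.
        inj_on (\<lambda>(i, j). p i j) ({..<k} \<times> {..<3}) \<and>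
        (\<forall>i<k. \<forall>j<3. p i j \<in> V) \<and>
        (\<forall>i<k. E (p i 0) (p i 1) \<and> E (p i 1) (p i 2)))"

lemma contains_kP3_iff_has_P3_packing: "contains_kP3 k n E \<longleftrightarrow> has_P3_packing {..<n} E k"
  unfolding contains_kP3_def has_P3_packing_def by simp

lemma has_P3_packing_0: "has_P3_packing V E 0"
  unfolding has_P3_packing_def by (intro exI[of _ "\<lambda>i j. 0"]) simp

lemma has_P3_packing_Suc:
  assumes h: "has_P3_packing (V - {a, b, c}) E k"
    and V: "a \<in> V" "b \<in> V" "c \<in> V" and d: "a \<noteq> b" "b \<noteq> c" "a \<noteq> c"
    and e: "E a b" "E b c"
  shows "has_P3_packing V E (Suc k)"
proof -
  from h obtain p :: "nat \<Rightarrow> nat \<Rightarrow> nat" where inj: "inj_on (\<lambda>(i, j). p i j) ({..<k} \<times> {..<3})"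
    and pV: "\<forall>i<k. \<forall>j<3. p i j \<in> V - {a, b, c}"
    and pE: "\<forall>i<k. E (p i 0) (p i 1) \<and> E (p i 1) (p i 2)"
    unfolding has_P3_packing_def by blast
  define q where "q i j = (if i = k then (if j = 0 then a else if j = 1 then b else c) else p i j)" for i j
  have qk: "q k j \<in> {a, b, c}" for j unfolding q_def by auto
  have old: "q i j = p i j" "q i j \<notin> {a, b, c}" if "i < k" "j < 3" for i j
    using pV that unfolding q_def by auto
  have "inj_on (\<lambda>(i, j). q i j) ({..<Suc k} \<times> {..<3})"
  proof (rule inj_onI, clarify)
    fix i j i' j' assume A: "i < Suc k" "j < 3" "i' < Suc k" "j' < 3" and eq: "q i j = q i' j'"
    consider "i = k" "i' = k" | "i < k" "i' < k" | "i = k \<and> i' < k \<or> i < k \<and> i' = k"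
      using A by linarith
    thus "i = i' \<and> j = j'"
    proof cases
      case 1
      with eq A d show ?thesis unfolding q_def
        by (auto simp: less_Suc_eq numeral_3_eq_3 split: if_splits)
    next
      case 2
      with eq A inj old show ?thesis unfolding inj_on_def by auto
    next
      case 3
      with eq A qk old show ?thesis by metis
    qed
  qed
  moreover have "\<forall>i<Suc k. \<forall>j<3. q i j \<in> V"
    using pV V unfolding q_def by (auto simp: less_Suc_eq)
  moreover have "\<forall>i<Suc k. E (q i 0) (q i 1) \<and> E (q i 1) (q i 2)"
    using pE e unfolding q_def by (auto simp: less_Suc_eq)
  ultimately show ?thesis unfolding has_P3_packing_def by blast
qed

lemma has_P3_packing_1E:
  assumes "has_P3_packing V E 1"
  obtains a b c where "a \<in> V" "b \<in> V" "c \<in> V" "a \<noteq> b" "b \<noteq> c" "a \<noteq> c" "E a b" "E b c"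
proof -
  from assms obtain p :: "nat \<Rightarrow> nat \<Rightarrow> nat" where inj: "inj_on (\<lambda>(i, j). p i j) ({..<1} \<times> {..<3})"
    and pV: "\<forall>i<1. \<forall>j<3. p i j \<in> V"
    and pE: "\<forall>i<1. E (p i 0) (p i 1) \<and> E (p i 1) (p i 2)"
    unfolding has_P3_packing_def by blast
  have d: "p 0 0 \<noteq> p 0 1" "p 0 1 \<noteq> p 0 2" "p 0 0 \<noteq> p 0 2"
    using inj unfolding inj_on_def by fastforce+
  show ?thesis by (rule that[of "p 0 0" "p 0 1" "p 0 2"]) (use pV pE d in auto)
qed

lemma card_ge_2_obtains:
  assumes "card A \<ge> 2"
  obtains a b where "a \<in> A" "b \<in> A" "a \<noteq> b"
proof -
  from assms obtain B where "B \<subseteq> A" "card B = 2"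
    by (metis obtain_subset_with_card_n)
  then obtain a b where "B = {a, b}" "a \<noteq> b" by (auto simp: card_2_iff)
  thus ?thesis using that \<open>B \<subseteq> A\<close> by auto
qed

lemma P3_free_degree_le_1:
  assumes h: "\<not> has_P3_packing V E 1" and u: "u \<in> V"
    and irr: "\<And>u. \<not> E u u" and sym: "\<And>u w. E u w \<Longrightarrow> E w u"
  shows "vertex_degree V E u \<le> 1"
proof (rule ccontr)
  assume "\<not> vertex_degree V E u \<le> 1"
  hence "card {w \<in> V. E u w} \<ge> 2" unfolding vertex_degree_def by simp
  then obtain a b where ab: "a \<in> {w \<in> V. E u w}" "b \<in> {w \<in> V. E u w}" "a \<noteq> b"
    by (rule card_ge_2_obtains)
  have "has_P3_packing V E (Suc 0)"
    by (rule has_P3_packing_Suc[where a = a and b = u and c = b, OF has_P3_packing_0])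
      (use ab u irr sym in auto)
  with h show False by simp
qed

lemma P3_packing_side_card:
  fixes p :: "nat \<Rightarrow> nat \<Rightarrow> nat"
  assumes col: "\<And>u v. E u v \<Longrightarrow> c u \<noteq> c v"
    and pE: "\<forall>i<k. E (p i 0) (p i 1) \<and> E (p i 1) (p i 2)"
  shows "card {w \<in> (\<lambda>(i, j). p i j) ` ({..<k} \<times> {..<3}). c w = s} \<le> 2 * k"
proof -
  define T where "T i = {w. (w = p i 0 \<or> w = p i 1 \<or> w = p i 2) \<and> c w = s}" for i
  have "{w \<in> (\<lambda>(i, j). p i j) ` ({..<k} \<times> {..<3}). c w = s} \<subseteq> (\<Union>i<k. T i)"
  proof
    fix w assume "w \<in> {w \<in> (\<lambda>(i, j). p i j) ` ({..<k} \<times> {..<3}). c w = s}"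
    then obtain i j where "i < k" "j < 3" "w = p i j" "c w = s" by auto
    thus "w \<in> (\<Union>i<k. T i)"
      unfolding T_def by (auto simp: numeral_3_eq_3 numeral_2_eq_2 less_Suc_eq)
  qed
  hence "card {w \<in> (\<lambda>(i, j). p i j) ` ({..<k} \<times> {..<3}). c w = s} \<le> card (\<Union>i<k. T i)"
    by (rule card_mono[rotated]) (auto simp: T_def)
  also have "\<dots> \<le> (\<Sum>i<k. card (T i))" by (rule card_UN_le) simp
  also have "\<dots> \<le> (\<Sum>i<k. 2)"
  proof (rule sum_mono)
    fix i assume "i \<in> {..<k}"
    hence "c (p i 0) \<noteq> c (p i 1)" "c (p i 1) \<noteq> c (p i 2)" using pE col by auto
    hence "T i \<subseteq> {p i 1} \<or> T i \<subseteq> {p i 0, p i 2}"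
      unfolding T_def by (cases "c (p i 1) = s") auto
    moreover have "card {p i 1} \<le> 2" "card {p i 0, p i 2} \<le> 2" by (simp_all add: card_insert_le_m1)
    ultimately show "card (T i) \<le> 2" by (meson card_mono finite.emptyI finite.insertI le_trans)
  qed
  finally show ?thesis by simp
qed

text \<open>The \<open>k\<close> paths use at most \<open>2 k\<close> vertices of the colour class opposite to \<open>v\<close>,
  so two neighbours of \<open>v\<close> are still free.\<close>

lemma has_P3_packing_Suc_high_degree:
  fixes c :: "nat \<Rightarrow> bool"
  assumes h: "has_P3_packing (V - {v}) E k" and v: "v \<in> V" and fin: "finite V"
    and dv: "vertex_degree V E v \<ge> 2 * k + 2"
    and col: "\<And>u w. E u w \<Longrightarrow> c u \<noteq> c w" and sym: "\<And>u w. E u w \<Longrightarrow> E w u"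
  shows "has_P3_packing V E (Suc k)"
proof -
  from h obtain p :: "nat \<Rightarrow> nat \<Rightarrow> nat" where inj: "inj_on (\<lambda>(i, j). p i j) ({..<k} \<times> {..<3})"
    and pV: "\<forall>i<k. \<forall>j<3. p i j \<in> V - {v}"
    and pE: "\<forall>i<k. E (p i 0) (p i 1) \<and> E (p i 1) (p i 2)"
    unfolding has_P3_packing_def by blast
  define F where "F = (\<lambda>(i, j). p i j) ` ({..<k} \<times> {..<3})"
  define N where "N = {w \<in> V. E v w}"
  have finN: "finite N" using fin unfolding N_def by simp
  have "N \<inter> F \<subseteq> {w \<in> F. c w = (\<not> c v)}" unfolding N_def using col by auto
  hence "card (N \<inter> F) \<le> card {w \<in> F. c w = (\<not> c v)}"
    by (rule card_mono[rotated]) (simp add: F_def)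
  also have "\<dots> \<le> 2 * k" unfolding F_def by (rule P3_packing_side_card[OF col pE])
  finally have "card (N \<inter> F) \<le> 2 * k" .
  moreover have "card N = card (N - F) + card (N \<inter> F)"
    using card_Int_Diff[OF finN, of F] by simp
  moreover have "card N \<ge> 2 * k + 2" using dv unfolding vertex_degree_def N_def .
  ultimately have "card (N - F) \<ge> 2" by linarith
  then obtain w1 w2 where w: "w1 \<in> N - F" "w2 \<in> N - F" "w1 \<noteq> w2" by (rule card_ge_2_obtains)
  have "has_P3_packing (V - {w1, v, w2}) E k"
    unfolding has_P3_packing_def
  proof (intro exI[of _ p] conjI)
    show "\<forall>i<k. \<forall>j<3. p i j \<in> V - {w1, v, w2}"
    proof (intro allI impI)
      fix i j :: nat assume "i < k" "j < 3"
      hence "p i j \<in> F" unfolding F_def by force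
      thus "p i j \<in> V - {w1, v, w2}" using pV \<open>i < k\<close> \<open>j < 3\<close> w by auto
    qed
  qed (use inj pE in auto)
  moreover have "w1 \<noteq> v" "w2 \<noteq> v" using w col unfolding N_def by auto
  ultimately show ?thesis
    using has_P3_packing_Suc[of V w1 v w2 E k] w v sym unfolding N_def by auto
qed

lemma complete_bipartite_has_P3_packing:
  "finite A \<Longrightarrow> finite B \<Longrightarrow> A \<inter> B = {} \<Longrightarrow> A \<union> B \<subseteq> V \<Longrightarrow>
   (\<forall>a\<in>A. \<forall>b\<in>B. E a b \<and> E b a) \<Longrightarrow> card A \<ge> j \<Longrightarrow> card B \<ge> j \<Longrightarrow>
   card A + card B \<ge> 3 * j \<Longrightarrow> has_P3_packing V E j"
proof (induction j arbitrary: A B V)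
  case 0
  show ?case by (rule has_P3_packing_0)
next
  case (Suc j)
  have larger_side: "has_P3_packing V E (Suc j)"
    if fA: "finite A" and fB: "finite B" and dis: "A \<inter> B = {}" and sub: "A \<union> B \<subseteq> V"
      and e: "\<forall>a\<in>A. \<forall>b\<in>B. E a b \<and> E b a" and cA: "card A \<ge> Suc j" and cB: "card B \<ge> Suc j"
      and cs: "card A + card B \<ge> 3 * Suc j" and ge: "card B \<le> card A" for A B V
  proof -
    have s3: "3 * Suc j = 3 * j + 3" by simp
    have "card A \<ge> 2" using cs ge s3 by linarith
    then obtain a1 a2 where a: "a1 \<in> A" "a2 \<in> A" "a1 \<noteq> a2" by (rule card_ge_2_obtains)
    obtain b where b: "b \<in> B" using cB fB by (metis all_not_in_conv card.empty not_less_eq_eq zero_le)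
    have ab: "a1 \<notin> B" "a2 \<notin> B" "b \<notin> A" using a b dis by auto
    have cA': "card (A - {a1, a2}) = card A - 2" using a fA by (simp add: card_Diff_subset)
    have cB': "card (B - {b}) = card B - 1" using b fB by simp
    have "has_P3_packing (V - {a1, b, a2}) E j"
    proof (rule Suc.IH)
      show "finite (A - {a1, a2})" "finite (B - {b})" using fA fB by auto
      show "(A - {a1, a2}) \<inter> (B - {b}) = {}" using dis by auto
      show "A - {a1, a2} \<union> (B - {b}) \<subseteq> V - {a1, b, a2}" using sub ab by auto
      show "\<forall>a\<in>A - {a1, a2}. \<forall>b\<in>B - {b}. E a b \<and> E b a" using e by auto
      show "j \<le> card (A - {a1, a2})" "j \<le> card (B - {b})"
        "3 * j \<le> card (A - {a1, a2}) + card (B - {b})"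
        using cA' cB' cA cB cs ge s3 by linarith+
    qed
    thus ?thesis using has_P3_packing_Suc[of V a1 b a2 E j] a b ab sub e by auto
  qed
  show ?case
  proof (cases "card B \<le> card A")
    case True
    thus ?thesis using larger_side Suc.prems by blast
  next
    case False
    thus ?thesis using larger_side[of B A V] Suc.prems by (auto simp: Int_commute Un_commute)
  qed
qed

section \<open>Edge count of bipartite graphs without \<open>k\<close> disjoint \<open>P\<^sub>3\<close>\<close>

lemma degree_sum_matching:
  assumes fin: "finite W" and low: "\<And>u. u \<in> W \<Longrightarrow> vertex_degree W E u \<le> 1"
  shows "degree_sum W E = card {u \<in> W. vertex_degree W E u = 1}"
proof -
  have "degree_sum W E = (\<Sum>u\<in>W. if vertex_degree W E u = 1 then 1 else 0)"
    unfolding degree_sum_def by (rule sum.cong) (use low in \<open>auto simp: le_Suc_eq\<close>)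
  also have "\<dots> = card {u \<in> W. vertex_degree W E u = 1}" using fin by (simp add: sum.If_cases Int_def)
  finally show ?thesis .
qed

text \<open>Matching partners inject the matched vertices of the independent set \<open>N\<close> into
  the matched vertices outside \<open>N\<close>.\<close>

lemma matching_card_Int_le_card_Diff:
  assumes fin: "finite W" and low: "\<And>u. u \<in> W \<Longrightarrow> vertex_degree W E u \<le> 1"
    and sym: "\<And>u w. E u w \<Longrightarrow> E w u" and indep: "\<And>u w. u \<in> N \<Longrightarrow> w \<in> N \<Longrightarrow> \<not> E u w"
  defines "T \<equiv> {u \<in> W. vertex_degree W E u = 1}"
  shows "card (T \<inter> N) \<le> card (T - N)"
proof -
  have unique: "u1 = u2" if "w \<in> W" "u1 \<in> W" "u2 \<in> W" "E w u1" "E w u2" for w u1 u2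
    using low[OF that(1)] fin that(2-5) card_le_Suc0_iff_eq[of "{x \<in> W. E w x}"]
    unfolding vertex_degree_def by auto
  have "\<exists>w\<in>W. E u w" if "u \<in> T" for u
    using that card_gt_0_iff[of "{w \<in> W. E u w}"] unfolding T_def vertex_degree_def by auto
  then obtain partner where partner: "\<And>u. u \<in> T \<Longrightarrow> partner u \<in> W \<and> E u (partner u)"
    by metis
  show ?thesis
  proof (rule card_inj_on_le[of partner])
    show "inj_on partner (T \<inter> N)"
    proof (rule inj_onI)
      fix u1 u2 assume u: "u1 \<in> T \<inter> N" "u2 \<in> T \<inter> N" and eq: "partner u1 = partner u2"
      show "u1 = u2"
        by (rule unique[of "partner u1"]) (use partner[of u1] partner[of u2] u eq sym in \<open>auto simp: T_def\<close>)
    qed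
    show "partner ` (T \<inter> N) \<subseteq> T - N"
    proof (rule image_subsetI)
      fix u assume u: "u \<in> T \<inter> N"
      have y: "partner u \<in> W" "E (partner u) u" using partner u sym by auto
      hence "vertex_degree W E (partner u) \<noteq> 0"
        using u fin unfolding T_def vertex_degree_def by auto
      hence "partner u \<in> T" using low[OF y(1)] y(1) unfolding T_def by simp
      moreover have "partner u \<notin> N" using indep u y(2) by blast
      ultimately show "partner u \<in> T - N" by simp
    qed
    show "finite (T - N)" using fin unfolding T_def by simp
  qed
qed

lemma matching_degree_sum_le:
  assumes fin: "finite W" and low: "\<And>u. u \<in> W \<Longrightarrow> vertex_degree W E u \<le> 1"
    and sym: "\<And>u w. E u w \<Longrightarrow> E w u"
    and N: "N \<subseteq> W" and indep: "\<And>u w. u \<in> N \<Longrightarrow> w \<in> N \<Longrightarrow> \<not> E u w"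
  shows "degree_sum W E + 2 * card N \<le> 2 * card W"
proof -
  define T where "T = {u \<in> W. vertex_degree W E u = 1}"
  have finT: "finite T" and TW: "T \<subseteq> W" using fin unfolding T_def by auto
  have "card (T \<inter> N) \<le> card (T - N)"
    unfolding T_def by (rule matching_card_Int_le_card_Diff[OF fin low sym indep])
  moreover have "card T = card (T \<inter> N) + card (T - N)" by (rule card_Int_Diff[OF finT])
  moreover have "card (T - N) \<le> card (W - N)" by (rule card_mono) (use fin TW in auto)
  moreover have "card (W - N) = card W - card N" by (rule card_Diff_subset) (use fin N finite_subset in auto)
  moreover have "card N \<le> card W" by (rule card_mono[OF fin N])
  ultimately show ?thesis using degree_sum_matching[OF fin low] unfolding T_def by linarith
qed

lemma degree_sum_matching_plus_vertex:
  fixes c :: "nat \<Rightarrow> bool"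
  assumes fin: "finite V" and v: "v \<in> V"
    and low: "\<And>u. u \<in> V - {v} \<Longrightarrow> vertex_degree (V - {v}) E u \<le> 1"
    and col: "\<And>u w. E u w \<Longrightarrow> c u \<noteq> c w" and sym: "\<And>u w. E u w \<Longrightarrow> E w u"
  shows "degree_sum V E \<le> 2 * (card V - 1)"
proof -
  let ?W = "V - {v}" and ?N = "{w \<in> V. E v w}"
  have "degree_sum V E \<le> degree_sum ?W E + 2 * (\<Sum>q\<in>{v}. vertex_degree V E q)"
    by (rule degree_sum_remove) (use fin v sym in auto)
  moreover have "degree_sum ?W E + 2 * card ?N \<le> 2 * card ?W"
  proof (rule matching_degree_sum_le)
    show "\<not> E u w" if "u \<in> ?N" "w \<in> ?N" for u w
      using that col[of v u] col[of v w] col[of u w] by auto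
  qed (use fin low sym col[of v v] in auto)
  ultimately show ?thesis using fin v by (simp add: vertex_degree_def)
qed

lemma P3_free_degree_sum_le_card:
  assumes "finite V" and "\<not> has_P3_packing V E 1"
    and "\<And>u. \<not> E u u" and "\<And>u w. E u w \<Longrightarrow> E w u"
  shows "degree_sum V E \<le> card V"
  using assms by (intro degree_sum_le_card P3_free_degree_le_1) blast+

lemma degree_sum_remove_three:
  assumes fin: "finite V" and sym: "\<And>u w. E u w \<Longrightarrow> E w u"
    and abd: "a \<in> V" "b \<in> V" "d \<in> V" "a \<noteq> b" "b \<noteq> d" "a \<noteq> d"
    and low: "\<And>q. q \<in> V \<Longrightarrow> vertex_degree V E q \<le> D"
  shows "degree_sum V E \<le> degree_sum (V - {a, b, d}) E + 6 * D"
proof -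
  have "degree_sum V E \<le> degree_sum (V - {a, b, d}) E + 2 * (\<Sum>q\<in>{a, b, d}. vertex_degree V E q)"
    by (rule degree_sum_remove) (use fin abd sym in auto)
  moreover have "(\<Sum>q\<in>{a, b, d}. vertex_degree V E q) \<le> 3 * D"
    using low[OF abd(1)] low[OF abd(2)] low[OF abd(3)] abd(4-6) by simp
  ultimately show ?thesis by simp
qed

lemma part_product_le:
  fixes x y k n :: nat
  assumes "x + y = n" "x \<le> k" "2 * k \<le> n"
  shows "x * y \<le> k * (n - k)"
proof -
  obtain a where k: "k = x + a" using assms(2) le_Suc_ex by blast
  obtain b where y: "y = k + b" using assms le_Suc_ex[of k y] by auto
  have nk: "n - k = x + b" using assms(1) k y by simp
  have "x * y \<le> x * y + a * b" by simp
  also have "\<dots> = k * (n - k)" unfolding nk using k y by (simp add: algebra_simps)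
  finally show ?thesis .
qed

lemma degree_sum_high_degree_vertex:
  fixes c :: "nat \<Rightarrow> bool"
  assumes fin: "finite V" and col: "\<And>u w. E u w \<Longrightarrow> c u \<noteq> c w"
    and dv: "vertex_degree V E v > card V - k" and n: "2 * k \<le> card V"
  shows "degree_sum V E \<le> 2 * k * (card V - k)"
proof -
  let ?X = "{w \<in> V. c w = c v}" and ?Y = "{w \<in> V. c w \<noteq> c v}"
  have "degree_sum V E \<le> 2 * card ?X * card ?Y"
    using degree_sum_bipartite_le[OF fin, of E "\<lambda>w. c w = c v"] col by auto
  moreover have "vertex_degree V E v \<le> card ?Y"
    unfolding vertex_degree_def by (rule card_mono) (use fin col in auto)
  moreover have XY: "card ?X + card ?Y = card V"
    using card_Int_Diff[OF fin, of "{w. c w = c v}"] by (simp add: Int_def set_diff_eq add.commute)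
  ultimately have "card ?X \<le> k" using dv by linarith
  hence "card ?X * card ?Y \<le> k * (card V - k)" by (rule part_product_le[OF XY _ n])
  with \<open>degree_sum V E \<le> 2 * card ?X * card ?Y\<close> show ?thesis by simp
qed

lemma degree_sum_2P3_free:
  fixes c :: "nat \<Rightarrow> bool"
  assumes fin: "finite V" and n: "card V \<ge> 18" and free: "\<not> has_P3_packing V E 2"
    and col: "\<And>u w. E u w \<Longrightarrow> c u \<noteq> c w" and sym: "\<And>u w. E u w \<Longrightarrow> E w u"
  shows "degree_sum V E \<le> 2 * (card V - 1)"
proof (cases "\<exists>v\<in>V. vertex_degree V E v \<ge> 4")
  case True
  then obtain v where v: "v \<in> V" "vertex_degree V E v \<ge> 2 * 1 + 2" by auto
  have "\<not> has_P3_packing (V - {v}) E 1"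
    using has_P3_packing_Suc_high_degree[where E = E and c = c, OF _ v(1) fin v(2) col sym] free by (auto simp: numeral_2_eq_2)
  hence "vertex_degree (V - {v}) E u \<le> 1" if "u \<in> V - {v}" for u
    using P3_free_degree_le_1[where E = E, OF _ that _ sym] col by blast
  thus ?thesis by (rule degree_sum_matching_plus_vertex[where E = E and c = c, OF fin v(1) _ col sym])
next
  case False
  hence low: "\<And>v. v \<in> V \<Longrightarrow> vertex_degree V E v \<le> 3" by force
  show ?thesis
  proof (cases "has_P3_packing V E 1")
    case True
    then obtain a b d where abd: "a \<in> V" "b \<in> V" "d \<in> V" "a \<noteq> b" "b \<noteq> d" "a \<noteq> d" "E a b" "E b d"
      by (rule has_P3_packing_1E)
    have "\<not> has_P3_packing (V - {a, b, d}) E 1"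
      using has_P3_packing_Suc[of V a b d E 1] abd free by (auto simp: numeral_2_eq_2)
    hence "degree_sum (V - {a, b, d}) E \<le> card (V - {a, b, d})"
      using P3_free_degree_sum_le_card[where E = E, OF _ _ _ sym] fin col by blast
    moreover have "card (V - {a, b, d}) = card V - 3" using abd fin by (simp add: card_Diff_subset)
    moreover have "degree_sum V E \<le> degree_sum (V - {a, b, d}) E + 6 * 3"
      by (rule degree_sum_remove_three[OF fin sym abd(1-6) low])
    ultimately show ?thesis using n by simp
  next
    case False
    hence "degree_sum V E \<le> card V" using P3_free_degree_sum_le_card[where E = E, OF fin _ _ sym] col by blast
    thus ?thesis using n by simp
  qed
qed

lemma P3_deletion_arith:
  fixes k n :: nat
  assumes "k \<ge> 2" "n \<ge> 11 * k + 7"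
  shows "2 * (k - 1) * (n - 3 - k + 1) + 6 * (2 * k + 1) \<le> 2 * k * (n - k)"
proof -
  obtain m where n: "n = k + 2 + m" using assms le_Suc_ex[of "k + 2" n] by auto
  obtain j where k: "k = Suc j" using assms(1) by (cases k) auto
  have m: "m \<ge> 10 * k + 5" using assms n by simp
  have "2 * (k - 1) * (n - 3 - k + 1) + 6 * (2 * k + 1) = 2 * j * m + 12 * k + 6"
    using n k m by (simp add: algebra_simps)
  also have "\<dots> \<le> 2 * j * m + 2 * m + 4 * k" using m by simp
  also have "\<dots> = 2 * k * (n - k)" using n k by (simp add: algebra_simps)
  finally show ?thesis .
qed

lemma degree_sum_kP3_free_step_high_degree:
  fixes c :: "nat \<Rightarrow> bool"
  assumes col: "\<And>u w. E u w \<Longrightarrow> c u \<noteq> c w" and sym: "\<And>u w. E u w \<Longrightarrow> E w u"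
    and k: "k \<ge> 2"
    and IH: "\<And>W. finite W \<Longrightarrow> card W \<ge> 11 * k - 4 \<Longrightarrow> \<not> has_P3_packing W E k \<Longrightarrow>
               degree_sum W E \<le> 2 * (k - 1) * (card W - k + 1)"
    and fin: "finite V" and n: "card V \<ge> 11 * k + 7" and free: "\<not> has_P3_packing V E (Suc k)"
    and v: "v \<in> V" "vertex_degree V E v \<ge> 2 * k + 2"
  shows "degree_sum V E \<le> 2 * k * (card V - k)"
proof (cases "vertex_degree V E v \<le> card V - k")
  case True
  have "\<not> has_P3_packing (V - {v}) E k"
    using has_P3_packing_Suc_high_degree[where E = E and c = c, OF _ v(1) fin v(2) col sym] free by blast
  hence "degree_sum (V - {v}) E \<le> 2 * (k - 1) * (card (V - {v}) - k + 1)"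
    by (intro IH) (use fin v n in auto)
  moreover have "card (V - {v}) - k + 1 = card V - k" using fin v n by simp
  ultimately have IH': "degree_sum (V - {v}) E \<le> 2 * (k - 1) * (card V - k)" by (simp only:)
  have "degree_sum V E \<le> degree_sum (V - {v}) E + 2 * (\<Sum>q\<in>{v}. vertex_degree V E q)"
    by (rule degree_sum_remove) (use fin v sym in auto)
  also have "\<dots> \<le> 2 * (k - 1) * (card V - k) + 2 * (card V - k)" using IH' True by simp
  also have "\<dots> = 2 * k * (card V - k)" using k by (cases k) (simp_all add: algebra_simps)
  finally show ?thesis .
next
  case False
  thus ?thesis
    using degree_sum_high_degree_vertex[where E = E and c = c and v = v and k = k, OF fin col] n by simp
qed

lemma degree_sum_kP3_free_step_low_degree:
  fixes c :: "nat \<Rightarrow> bool"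
  assumes col: "\<And>u w. E u w \<Longrightarrow> c u \<noteq> c w" and sym: "\<And>u w. E u w \<Longrightarrow> E w u"
    and k: "k \<ge> 2"
    and IH: "\<And>W. finite W \<Longrightarrow> card W \<ge> 11 * k - 4 \<Longrightarrow> \<not> has_P3_packing W E k \<Longrightarrow>
               degree_sum W E \<le> 2 * (k - 1) * (card W - k + 1)"
    and fin: "finite V" and n: "card V \<ge> 11 * k + 7" and free: "\<not> has_P3_packing V E (Suc k)"
    and low: "\<And>v. v \<in> V \<Longrightarrow> vertex_degree V E v \<le> 2 * k + 1"
  shows "degree_sum V E \<le> 2 * k * (card V - k)"
proof (cases "has_P3_packing V E 1")
  case True
  then obtain a b d where abd: "a \<in> V" "b \<in> V" "d \<in> V" "a \<noteq> b" "b \<noteq> d" "a \<noteq> d" "E a b" "E b d"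
    by (rule has_P3_packing_1E)
  have "\<not> has_P3_packing (V - {a, b, d}) E k"
    using has_P3_packing_Suc[of V a b d E k] abd free by auto
  moreover have card3: "card (V - {a, b, d}) = card V - 3" using abd fin by (simp add: card_Diff_subset)
  ultimately have "degree_sum (V - {a, b, d}) E \<le> 2 * (k - 1) * (card (V - {a, b, d}) - k + 1)"
    by (intro IH) (use fin n in simp_all)
  hence "degree_sum (V - {a, b, d}) E \<le> 2 * (k - 1) * (card V - 3 - k + 1)" by (simp only: card3)
  moreover have "degree_sum V E \<le> degree_sum (V - {a, b, d}) E + 6 * (2 * k + 1)"
    by (rule degree_sum_remove_three[OF fin sym abd(1-6) low])
  ultimately show ?thesis using P3_deletion_arith[OF k n] by linarith
next
  case False
  hence "degree_sum V E \<le> card V"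
    using P3_free_degree_sum_le_card[where E = E, OF fin _ _ sym] col by blast
  also have "\<dots> \<le> 2 * k * (card V - k)" using k n by (cases k) (simp_all add: algebra_simps)
  finally show ?thesis .
qed

theorem degree_sum_kP3_free_bipartite:
  fixes c :: "nat \<Rightarrow> bool"
  assumes col: "\<And>u w. E u w \<Longrightarrow> c u \<noteq> c w" and sym: "\<And>u w. E u w \<Longrightarrow> E w u"
    and k: "k \<ge> 2"
  shows "finite V \<Longrightarrow> card V \<ge> 11 * k - 4 \<Longrightarrow> \<not> has_P3_packing V E k \<Longrightarrow>
         degree_sum V E \<le> 2 * (k - 1) * (card V - k + 1)"
  using k
proof (induction k arbitrary: V rule: nat_induct_at_least)
  case base
  hence "degree_sum V E \<le> 2 * (card V - 1)"
    using degree_sum_2P3_free[where E = E and c = c, OF _ _ _ col sym] by simp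
  moreover have "card V - 2 + 1 = card V - 1" using base by simp
  ultimately show ?case by simp
next
  case (Suc k)
  have n: "card V \<ge> 11 * k + 7" using Suc.prems(2) by simp
  have "degree_sum V E \<le> 2 * k * (card V - k)"
  proof (cases "\<exists>v\<in>V. vertex_degree V E v \<ge> 2 * k + 2")
    case True
    then obtain v where "v \<in> V" "vertex_degree V E v \<ge> 2 * k + 2" by blast
    thus ?thesis
      using degree_sum_kP3_free_step_high_degree[where E = E and c = c,
          OF col sym Suc.hyps(1) Suc.IH Suc.prems(1) n Suc.prems(3)] by blast
  next
    case False
    hence "\<And>v. v \<in> V \<Longrightarrow> vertex_degree V E v \<le> 2 * k + 1" by force
    thus ?thesis
      using degree_sum_kP3_free_step_low_degree[where E = E and c = c,
          OF col sym Suc.hyps(1) Suc.IH Suc.prems(1) n Suc.prems(3)] by blast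
  qed
  moreover have "card V - Suc k + 1 = card V - k" using Suc.prems(2) by simp
  ultimately show ?case by simp
qed

section \<open>Spectral radius of bipartite graphs\<close>

locale bipartite_eigenvector =
  fixes n :: nat and E :: "nat \<Rightarrow> nat \<Rightarrow> bool" and c :: "nat \<Rightarrow> bool"
    and x :: "nat \<Rightarrow> real" and lam :: real
  assumes sym: "\<And>u v. E u v \<Longrightarrow> E v u"
    and col: "\<And>u v. E u v \<Longrightarrow> c u \<noteq> c v"
    and ev: "\<And>i. i < n \<Longrightarrow> (\<Sum>j<n. adj E i j * x j) = lam * x i"
begin

definition side_mass :: real where
  "side_mass = (\<Sum>i<n. if c i then (x i)\<^sup>2 else 0)"

definition opposite_mass :: real where
  "opposite_mass = (\<Sum>i<n. if c i then 0 else (x i)\<^sup>2)"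

definition rdeg :: "nat \<Rightarrow> real" where
  "rdeg i = (\<Sum>j<n. adj E i j)"

definition side_degree_sum :: real where
  "side_degree_sum = (\<Sum>i<n. if c i then rdeg i else 0)"

definition nbr_mass :: "nat \<Rightarrow> real" where
  "nbr_mass i = (\<Sum>j<n. adj E i j * (x j)\<^sup>2)"

text \<open>The slack of a vertex \<open>i\<close> with \<^term>\<open>c i\<close> is nonnegative by Cauchy-Schwarz on row \<open>i\<close>
  and because all neighbours of \<open>i\<close> lie in the other colour class; summing the slacks gives
  \<open>\<lambda>\<^sup>2 \<le> side_degree_sum\<close>, and in the equality case every slack vanishes.\<close>

definition slack :: "nat \<Rightarrow> real" where
  "slack i = (if c i then rdeg i * opposite_mass - (lam * x i)\<^sup>2 else 0)"

lemma adj_nonzero_colours: "adj E i j \<noteq> 0 \<Longrightarrow> c i \<noteq> c j"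
  using col by (auto simp: adj_def split: if_splits)

lemma adj_commute: "adj E i j = adj E j i"
  using sym unfolding adj_def by auto

lemma rdeg_nonneg: "rdeg i \<ge> 0"
  unfolding rdeg_def adj_def by (simp add: sum_nonneg)

lemma rdeg_eq_vertex_degree: "rdeg i = real (vertex_degree {..<n} E i)"
  unfolding rdeg_def by (simp add: vertex_degree_eq_sum adj_def of_nat_sum if_distrib cong: if_cong)

lemma rdeg_eq_0_imp_not_adjacent:
  assumes "rdeg i = 0" "j < n"
  shows "\<not> E i j"
proof
  assume "E i j"
  have "adj E i j \<le> rdeg i"
    unfolding rdeg_def by (rule member_le_sum) (use assms(2) in \<open>auto simp: adj_def\<close>)
  with assms(1) \<open>E i j\<close> show False by (simp add: adj_def)
qed

lemma eigen_row_product: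
  assumes "i < n"
  shows "lam * (x i)\<^sup>2 = (\<Sum>j<n. adj E i j * x i * x j)"
proof -
  have "lam * (x i)\<^sup>2 = (\<Sum>j<n. adj E i j * x j) * x i"
    using ev[OF assms] by (simp add: power2_eq_square mult.assoc)
  also have "\<dots> = (\<Sum>j<n. adj E i j * x i * x j)"
    by (subst sum_distrib_right) (simp add: mult_ac)
  finally show ?thesis .
qed

lemma side_mass_eq_opposite_mass:
  assumes "lam \<noteq> 0"
  shows "side_mass = opposite_mass"
proof -
  have "lam * side_mass = (\<Sum>i<n. \<Sum>j<n. if c i then adj E i j * x i * x j else 0)"
    unfolding side_mass_def sum_distrib_left by (intro sum.cong refl) (simp add: eigen_row_product)
  also have "\<dots> = (\<Sum>j<n. \<Sum>i<n. if c i then adj E i j * x i * x j else 0)"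
    by (rule sum.swap)
  also have "\<dots> = (\<Sum>j<n. \<Sum>i<n. if c j then 0 else adj E j i * x j * x i)"
    by (intro sum.cong refl) (use adj_nonzero_colours adj_commute in \<open>fastforce simp: mult_ac\<close>)
  also have "\<dots> = lam * opposite_mass"
    unfolding opposite_mass_def sum_distrib_left by (intro sum.cong refl) (simp add: eigen_row_product)
  finally show ?thesis using assms by simp
qed

lemma row_bound:
  assumes i: "i < n"
  shows "(lam * x i)\<^sup>2 \<le> rdeg i * nbr_mass i"
proof -
  have idem: "adj E i j * (adj E i j * y) = adj E i j * y" "(adj E i j)\<^sup>2 = adj E i j"
    "(adj E i j * y)\<^sup>2 = adj E i j * y\<^sup>2" for j y
    by (simp_all add: adj_def)
  have "(lam * x i)\<^sup>2 = (\<Sum>j<n. adj E i j * (adj E i j * x j))\<^sup>2"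
    by (simp only: idem ev[OF i])
  also have "\<dots> \<le> (\<Sum>j<n. (adj E i j)\<^sup>2) * (\<Sum>j<n. (adj E i j * x j)\<^sup>2)"
    by (rule Cauchy_Schwarz_ineq_sum)
  also have "\<dots> = rdeg i * nbr_mass i"
    unfolding rdeg_def nbr_mass_def by (simp only: idem)
  finally show ?thesis .
qed

lemma nbr_mass_le: "c i \<Longrightarrow> nbr_mass i \<le> opposite_mass"
  unfolding nbr_mass_def opposite_mass_def
  by (rule sum_mono) (use adj_nonzero_colours[of i] in \<open>auto simp: adj_def\<close>)

lemma slack_nonneg: "i < n \<Longrightarrow> slack i \<ge> 0"
  using row_bound[of i] nbr_mass_le[of i] rdeg_nonneg[of i] unfolding slack_def
  by (auto intro: order_trans mult_left_mono)

lemma sum_slack: "(\<Sum>i<n. slack i) = side_degree_sum * opposite_mass - lam\<^sup>2 * side_mass"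
  unfolding slack_def side_degree_sum_def side_mass_def sum_distrib_left sum_distrib_right
  by (simp add: sum_subtractf[symmetric] power_mult_distrib if_distrib cong: if_cong)

lemma side_mass_pos:
  assumes "lam \<noteq> 0" "i0 < n" "x i0 \<noteq> 0"
  shows "side_mass > 0"
proof -
  have "side_mass + opposite_mass = (\<Sum>i<n. (x i)\<^sup>2)" unfolding side_mass_def opposite_mass_def
    by (simp add: sum.distrib[symmetric] if_distrib cong: if_cong)
  also have "\<dots> > 0" using assms by (intro sum_pos2[of _ i0]) auto
  finally show ?thesis using side_mass_eq_opposite_mass[OF assms(1)] by simp
qed

lemma sq_le_side_degree_sum:
  assumes "lam \<noteq> 0" "i0 < n" "x i0 \<noteq> 0"
  shows "lam\<^sup>2 \<le> side_degree_sum"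
proof -
  have "0 \<le> (\<Sum>i<n. slack i)" by (rule sum_nonneg) (simp add: slack_nonneg)
  hence "lam\<^sup>2 * side_mass \<le> side_degree_sum * side_mass"
    using sum_slack side_mass_eq_opposite_mass[OF assms(1)] by simp
  thus ?thesis using side_mass_pos[OF assms] by simp
qed

lemma two_side_degree_sum: "2 * side_degree_sum = real (degree_sum {..<n} E)"
proof -
  have swap: "(if c i then adj E i j else 0) = (if c j then 0 else adj E j i)" for i j
    using col[of i j] sym[of i j] sym[of j i] unfolding adj_def by auto
  have "side_degree_sum = (\<Sum>i<n. \<Sum>j<n. if c i then adj E i j else 0)"
    unfolding side_degree_sum_def rdeg_def by (intro sum.cong refl) simp
  also have "\<dots> = (\<Sum>j<n. \<Sum>i<n. if c i then adj E i j else 0)" by (rule sum.swap)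
  also have "\<dots> = (\<Sum>j<n. if c j then 0 else rdeg j)"
    unfolding swap rdeg_def by (intro sum.cong refl) simp
  finally have opposite: "side_degree_sum = (\<Sum>j<n. if c j then 0 else rdeg j)" .
  have "(\<Sum>i<n. rdeg i) = side_degree_sum + (\<Sum>j<n. if c j then 0 else rdeg j)"
    unfolding side_degree_sum_def sum.distrib[symmetric] by (rule sum.cong) auto
  thus ?thesis using opposite by (simp add: degree_sum_def rdeg_eq_vertex_degree of_nat_sum)
qed

context
  fixes i0 :: nat
  assumes lam: "lam \<noteq> 0" and i0: "i0 < n" "x i0 \<noteq> 0" and eq: "lam\<^sup>2 = side_degree_sum"
begin

lemma equality_slack_zero: "i < n \<Longrightarrow> slack i = 0"
proof -
  have "(\<Sum>i<n. slack i) = 0" using sum_slack eq side_mass_eq_opposite_mass[OF lam] by simp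
  thus "i < n \<Longrightarrow> slack i = 0" using slack_nonneg by (subst (asm) sum_nonneg_eq_0_iff) auto
qed

lemma equality_isolated: "i < n \<Longrightarrow> c i \<Longrightarrow> x i = 0 \<Longrightarrow> j < n \<Longrightarrow> \<not> E i j"
  using equality_slack_zero[of i] side_mass_pos[OF lam i0] side_mass_eq_opposite_mass[OF lam]
    rdeg_eq_0_imp_not_adjacent[of i j]
  unfolding slack_def by simp

lemma equality_adjacent:
  assumes "i < n" "c i" "x i \<noteq> 0" "j < n" "\<not> c j" "x j \<noteq> 0"
  shows "E i j"
proof -
  have "rdeg i * opposite_mass = (lam * x i)\<^sup>2"
    using equality_slack_zero[OF assms(1)] assms(2) unfolding slack_def by simp
  moreover have "(lam * x i)\<^sup>2 \<le> rdeg i * nbr_mass i" by (rule row_bound[OF assms(1)])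
  moreover have "(lam * x i)\<^sup>2 > 0" using lam assms(3) by simp
  ultimately have "opposite_mass \<le> nbr_mass i" using rdeg_nonneg[of i]
    by (metis mult_le_cancel_left_pos mult_eq_0_iff order_less_irrefl order_le_less)
  hence "(\<Sum>l<n. (if c l then 0 else (x l)\<^sup>2) - adj E i l * (x l)\<^sup>2) = 0"
    using nbr_mass_le[OF assms(2)] unfolding opposite_mass_def nbr_mass_def by (simp add: sum_subtractf)
  moreover have "\<forall>l\<in>{..<n}. (if c l then 0 else (x l)\<^sup>2) - adj E i l * (x l)\<^sup>2 \<ge> 0"
    using adj_nonzero_colours[of i] assms(2) by (auto simp: adj_def)
  ultimately have "(if c j then 0 else (x j)\<^sup>2) - adj E i j * (x j)\<^sup>2 = 0"
    using assms(4) by (subst (asm) sum_nonneg_eq_0_iff) auto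
  thus ?thesis using assms(5,6) by (auto simp: adj_def split: if_splits)
qed

end

end

lemma bipartite_adj_eigenvalue_sq_le:
  fixes c :: "nat \<Rightarrow> bool"
  assumes sym: "\<And>u v. E u v \<Longrightarrow> E v u" and col: "\<And>u v. E u v \<Longrightarrow> c u \<noteq> c v"
    and ev: "adj_eigenvalue n E lam"
  shows "2 * lam\<^sup>2 \<le> real (degree_sum {..<n} E)"
proof (cases "lam = 0")
  case False
  from ev obtain x i0 where i0: "i0 < n" "x i0 \<noteq> 0"
    and evx: "\<forall>i<n. (\<Sum>j<n. adj E i j * x j) = lam * x i"
    unfolding adj_eigenvalue_def by blast
  interpret bipartite_eigenvector n E c x lam
    using sym col evx by unfold_locales auto
  show ?thesis using sq_le_side_degree_sum[OF False i0] two_side_degree_sum by simp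
qed simp

lemma bipartite_adj_eigenvalue_sq_eq:
  fixes c :: "nat \<Rightarrow> bool"
  assumes sym: "\<And>u v. E u v \<Longrightarrow> E v u" and col: "\<And>u v. E u v \<Longrightarrow> c u \<noteq> c v"
    and bnd: "\<And>u v. E u v \<Longrightarrow> u < n \<and> v < n"
    and ev: "adj_eigenvalue n E lam" and lam: "lam \<noteq> 0"
    and eq: "2 * lam\<^sup>2 = real (degree_sum {..<n} E)"
  shows "\<exists>P \<subseteq> {..<n}. \<forall>u v. E u v \<longleftrightarrow> u \<in> P \<and> v \<in> P \<and> c u \<noteq> c v"
proof -
  from ev obtain x i0 where i0: "i0 < n" "x i0 \<noteq> 0"
    and evx: "\<forall>i<n. (\<Sum>j<n. adj E i j * x j) = lam * x i"
    unfolding adj_eigenvalue_def by blast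
  interpret X: bipartite_eigenvector n E c x lam
    using sym col evx by unfold_locales auto
  interpret Y: bipartite_eigenvector n E "\<lambda>i. \<not> c i" x lam
    using sym col evx by unfold_locales auto
  have eX: "lam\<^sup>2 = X.side_degree_sum" using X.two_side_degree_sum eq by simp
  have eY: "lam\<^sup>2 = Y.side_degree_sum" using Y.two_side_degree_sum eq by simp
  define P where "P = {i. i < n \<and> x i \<noteq> 0}"
  have isolated: "\<not> E i j" if "i < n" "x i = 0" "j < n" for i j
    using X.equality_isolated[OF lam i0 eX that(1) _ that(2,3)]
      Y.equality_isolated[OF lam i0 eY that(1) _ that(2,3)] by blast
  have EP: "E u v \<longleftrightarrow> u \<in> P \<and> v \<in> P \<and> c u \<noteq> c v" for u v
  proof
    assume Euv: "E u v"
    thus "u \<in> P \<and> v \<in> P \<and> c u \<noteq> c v"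
      using bnd[OF Euv] isolated[of u v] isolated[of v u] sym[OF Euv] col[OF Euv] unfolding P_def by blast
  next
    assume "u \<in> P \<and> v \<in> P \<and> c u \<noteq> c v"
    thus "E u v"
      using X.equality_adjacent[OF lam i0 eX, of u v] Y.equality_adjacent[OF lam i0 eY, of u v]
      unfolding P_def by (cases "c u") auto
  qed
  show ?thesis by (rule exI[of _ P]) (use EP in \<open>auto simp: P_def\<close>)
qed

lemma complete_bipartite_adj_eigenvalue:
  assumes cb: "is_complete_bipartite a b n E" and a: "a \<ge> 1" and b: "b \<ge> 1"
  shows "adj_eigenvalue n E (sqrt (real a * real b))"
proof -
  from cb obtain S where S: "S \<subseteq> {..<n}" "card S = a" "card ({..<n} - S) = b"
    and ES: "\<And>u v. E u v \<longleftrightarrow> (u < n \<and> v < n \<and> (u \<in> S \<longleftrightarrow> v \<notin> S))"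
    unfolding is_complete_bipartite_def by blast
  define x where "x i = (if i \<in> S then sqrt (real b) else sqrt (real a))" for i
  obtain i0 where i0: "i0 \<in> S" using S(2) a by fastforce
  have "(\<Sum>j<n. adj E i j * x j) = sqrt (real a * real b) * x i" if i: "i < n" for i
  proof (cases "i \<in> S")
    case True
    have "(\<Sum>j<n. adj E i j * x j) = (\<Sum>j\<in>{..<n} - S. sqrt (real a))"
      by (rule sum.mono_neutral_cong_right) (use True i ES in \<open>auto simp: adj_def x_def\<close>)
    thus ?thesis using True S(3) unfolding x_def by (simp add: real_sqrt_mult)
  next
    case False
    have "(\<Sum>j<n. adj E i j * x j) = (\<Sum>j\<in>S. sqrt (real b))"
      by (rule sum.mono_neutral_cong_right) (use False i ES S(1) in \<open>auto simp: adj_def x_def\<close>)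
    thus ?thesis using False S(2) unfolding x_def by (simp add: real_sqrt_mult)
  qed
  moreover have "i0 < n" "x i0 \<noteq> 0" using i0 S(1) b unfolding x_def by auto
  ultimately show ?thesis unfolding adj_eigenvalue_def by blast
qed

section \<open>The extremal graph\<close>

lemma small_parts_product_lt:
  fixes a b k n :: nat
  assumes "a + b < 3 * k" "k \<ge> 2" "n \<ge> 11 * k - 4"
  shows "a * b < (k - 1) * (n - k + 1)"
proof -
  have "4 * (a * b) \<le> (a + b) * (a + b)"
  proof -
    have "4 * (int a * int b) \<le> (int a + int b) * (int a + int b)"
      using zero_le_power2[of "int a - int b"] by (simp add: power2_eq_square algebra_simps)
    thus ?thesis by (metis of_nat_add of_nat_le_iff of_nat_mult of_nat_numeral)
  qed
  also have "\<dots> \<le> (3 * k - 1) * (3 * k - 1)" using assms(1) by (intro mult_mono) auto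
  finally have ab: "4 * (a * b) \<le> (3 * k - 1) * (3 * k - 1)" .
  obtain j where k: "k = j + 2" using assms(2) by (metis add.commute le_Suc_ex)
  define m where "m = n - k + 1"
  have m: "m \<ge> 10 * j + 17" using assms k unfolding m_def by simp
  have "(3 * k - 1) * (3 * k - 1) = 9 * (j * j) + 30 * j + 25" using k by (simp add: algebra_simps)
  moreover have "j * m \<ge> j * (10 * j + 17)" using m by simp
  hence "j * m \<ge> 10 * (j * j) + 17 * j" by (simp add: algebra_simps)
  moreover have "(k - 1) * (n - k + 1) = (j + 1) * m" using k unfolding m_def by simp
  hence "4 * ((k - 1) * (n - k + 1)) = 4 * (j * m) + 4 * m" by (simp add: algebra_simps)
  ultimately show ?thesis using ab m by linarith
qed

lemma product_eq_forces_parts: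
  fixes s t K M :: nat
  assumes "s \<le> K" "s + t \<le> K + M" "s * t = K * M" "K \<le> M" "K > 0"
  shows "s = K \<and> t = M"
proof (cases "s = K")
  case True
  thus ?thesis using assms(3,5) by simp
next
  case False
  obtain p where p: "K = s + p" "p \<ge> 1" using assms(1) False le_Suc_ex[of s K] by auto
  obtain q where q: "M = s + q" "q \<ge> p" using assms(4) p le_Suc_ex[of s M] by auto
  have "s * t \<le> s * (s + p + q)" using assms(2) p q by simp
  also have "\<dots> < s * (s + p + q) + p * q" using p q by simp
  also have "\<dots> = K * M" using p q by (simp add: algebra_simps)
  finally show ?thesis using assms(3) by simp
qed

lemma complete_bipartite_on_is_complete_bipartite:
  fixes c :: "nat \<Rightarrow> bool"
  assumes P: "P \<subseteq> {..<n}" and EP: "\<And>u v. E u v \<longleftrightarrow> u \<in> P \<and> v \<in> P \<and> c u \<noteq> c v"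
    and a: "card {i \<in> P. c i} = a" and b: "card {i \<in> P. \<not> c i} = b" and n: "a + b = n"
  shows "is_complete_bipartite a b n E"
proof -
  have "card P = a + b"
    using card_Int_Diff[of P "{i. c i}"] P finite_subset[OF P] a b by (simp add: Int_def set_diff_eq)
  hence Pn: "P = {..<n}" using card_subset_eq[OF _ P] n by simp
  show ?thesis unfolding is_complete_bipartite_def
  proof (intro exI[of _ "{i \<in> P. c i}"] conjI allI)
    have "{..<n} - {i \<in> P. c i} = {i \<in> P. \<not> c i}" using Pn by auto
    thus "card ({..<n} - {i \<in> P. c i}) = b" using b by simp
    fix u v show "E u v \<longleftrightarrow> (u < n \<and> v < n \<and> (u \<in> {i \<in> P. c i} \<longleftrightarrow> v \<notin> {i \<in> P. c i}))"
      using EP[of u v] Pn by auto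
  qed (use a P in auto)
qed

lemma kP3_free_complete_bipartite_small_side:
  fixes c :: "nat \<Rightarrow> bool"
  assumes k: "k \<ge> 2" and n: "n \<ge> 11 * k - 4"
    and P: "P \<subseteq> {..<n}" and EP: "\<And>u v. E u v \<longleftrightarrow> u \<in> P \<and> v \<in> P \<and> c u \<noteq> c v"
    and prod: "card {i \<in> P. c i} * card {i \<in> P. \<not> c i} = (k - 1) * (n - k + 1)"
    and free: "\<not> has_P3_packing {..<n} E k"
  shows "card {i \<in> P. c i} \<le> k - 1 \<or> card {i \<in> P. \<not> c i} \<le> k - 1"
proof (rule ccontr)
  let ?X = "{i \<in> P. c i}" and ?Y = "{i \<in> P. \<not> c i}"
  assume big: "\<not> (card ?X \<le> k - 1 \<or> card ?Y \<le> k - 1)"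
  show False
  proof (cases "card ?X + card ?Y \<ge> 3 * k")
    case True
    have "finite ?X" "finite ?Y" using finite_subset[OF P] by auto
    hence "has_P3_packing {..<n} E k"
      by (rule complete_bipartite_has_P3_packing) (use P EP big True in auto)
    with free show False ..
  next
    case False
    hence "card ?X * card ?Y < (k - 1) * (n - k + 1)"
      by (intro small_parts_product_lt[OF _ k n]) simp
    with prod show False by simp
  qed
qed

lemma kP3_free_complete_bipartite_on:
  fixes c :: "nat \<Rightarrow> bool"
  assumes k: "k \<ge> 2" and n: "n \<ge> 11 * k - 4"
    and P: "P \<subseteq> {..<n}" and EP: "\<And>u v. E u v \<longleftrightarrow> u \<in> P \<and> v \<in> P \<and> c u \<noteq> c v"
    and prod: "card {i \<in> P. c i} * card {i \<in> P. \<not> c i} = (k - 1) * (n - k + 1)"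
    and free: "\<not> has_P3_packing {..<n} E k"
  shows "is_complete_bipartite (k - 1) (n - k + 1) n E"
proof -
  let ?X = "{i \<in> P. c i}" and ?Y = "{i \<in> P. \<not> c i}"
  have "card ?X + card ?Y = card P"
    using card_Int_Diff[of P "{i. c i}"] finite_subset[OF P] by (simp add: Int_def set_diff_eq)
  also have "\<dots> \<le> n" using card_mono[OF _ P] by simp
  finally have XY: "card ?X + card ?Y \<le> n" .
  have KM: "k - 1 \<le> n - k + 1" "k - 1 > 0" "(k - 1) + (n - k + 1) = n" using k n by auto
  from kP3_free_complete_bipartite_small_side[where E = E and c = c, OF k n P EP prod free]
  show ?thesis
  proof (elim disjE)
    assume "card ?X \<le> k - 1"
    with product_eq_forces_parts[OF this _ prod KM(1,2)] XY KM(3)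
    show ?thesis by (intro complete_bipartite_on_is_complete_bipartite[OF P EP]) auto
  next
    assume "card ?Y \<le> k - 1"
    with product_eq_forces_parts[OF this _ _ KM(1,2), of "card ?X"] prod XY KM(3)
    show ?thesis
      by (intro complete_bipartite_on_is_complete_bipartite[where c = "\<lambda>i. \<not> c i", OF P])
        (auto simp: EP mult.commute)
  qed
qed

lemma spec_radius_le_sqrt_edges:
  fixes c :: "nat \<Rightarrow> bool"
  assumes sym: "\<And>u v. E u v \<Longrightarrow> E v u" and col: "\<And>u v. E u v \<Longrightarrow> c u \<noteq> c v"
    and "n > 0" and edges: "degree_sum {..<n} E \<le> 2 * B"
  shows "spec_radius n E \<le> sqrt (real B)"
proof -
  have ev: "adj_eigenvalue n E (spec_radius n E)" by (rule spec_radius_adj_eigenvalue) (use assms in auto)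
  have "2 * (spec_radius n E)\<^sup>2 \<le> real (degree_sum {..<n} E)"
    by (rule bipartite_adj_eigenvalue_sq_le[where E = E and c = c, OF sym col ev])
  thus ?thesis using edges by (intro real_le_rsqrt) simp
qed

lemma spec_radius_eq_sqrt_edges_imp_complete_bipartite_on:
  fixes c :: "nat \<Rightarrow> bool"
  assumes sym: "\<And>u v. E u v \<Longrightarrow> E v u" and col: "\<And>u v. E u v \<Longrightarrow> c u \<noteq> c v"
    and bnd: "\<And>u v. E u v \<Longrightarrow> u < n \<and> v < n"
    and "n > 0" and edges: "degree_sum {..<n} E \<le> 2 * B"
    and B: "B > 0" and eq: "spec_radius n E = sqrt (real B)"
  obtains P where "P \<subseteq> {..<n}" "\<And>u v. E u v \<longleftrightarrow> u \<in> P \<and> v \<in> P \<and> c u \<noteq> c v"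
    "card {i \<in> P. c i} * card {i \<in> P. \<not> c i} = B"
proof -
  have ev: "adj_eigenvalue n E (spec_radius n E)" by (rule spec_radius_adj_eigenvalue) (use assms in auto)
  have "2 * (spec_radius n E)\<^sup>2 \<le> real (degree_sum {..<n} E)"
    by (rule bipartite_adj_eigenvalue_sq_le[where E = E and c = c, OF sym col ev])
  hence tight: "2 * (spec_radius n E)\<^sup>2 = real (degree_sum {..<n} E)" and DS: "degree_sum {..<n} E = 2 * B"
    using eq edges by (simp_all add: of_nat_le_iff[symmetric])
  have "spec_radius n E \<noteq> 0" using eq B by simp
  from bipartite_adj_eigenvalue_sq_eq[where E = E and c = c, OF sym col bnd ev this tight]
  obtain P where P: "P \<subseteq> {..<n}" and EP: "\<forall>u v. E u v \<longleftrightarrow> u \<in> P \<and> v \<in> P \<and> c u \<noteq> c v"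
    by blast
  moreover have "card {i \<in> P. c i} * card {i \<in> P. \<not> c i} = B"
    using degree_sum_complete_bipartite_on[where E = E and c = c, OF finite_lessThan P EP[rule_format]] DS
    by simp
  ultimately show ?thesis using that by blast
qed

lemma complete_bipartite_le_spec_radius:
  assumes "is_complete_bipartite a b n E" and "a \<ge> 1" and "b \<ge> 1"
  shows "sqrt (real (a * b)) \<le> spec_radius n E"
  using complete_bipartite_adj_eigenvalue[OF assms] adj_eigenvalue_le_spec_radius by simp

lemma of_nat_mult_diff_eq:
  assumes "k \<ge> 1" "k \<le> n"
  shows "(real k - 1) * (real n - real k + 1) = real ((k - 1) * (n - k + 1))"
proof -
  have "real (k - 1) = real k - 1" "real (n - k + 1) = real n - real k + 1"
    using assms by (simp_all add: of_nat_diff)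
  thus ?thesis by (metis of_nat_mult)
qed

theorem mainTheorem3:
  fixes k n :: nat and E :: "nat \<Rightarrow> nat \<Rightarrow> bool"
  assumes "k \<ge> 2"
    and "n \<ge> 11 * k - 4"
    and "simple_graph n E"
    and "bipartite_graph E"
    and "\<not> contains_kP3 k n E"
  shows "spec_radius n E \<le> sqrt ((real k - 1) * (real n - real k + 1)) \<and>
         (spec_radius n E = sqrt ((real k - 1) * (real n - real k + 1)) \<longleftrightarrow>
            is_complete_bipartite (k - 1) (n - k + 1) n E)"
proof -
  have sym: "\<And>u v. E u v \<Longrightarrow> E v u" and bnd: "\<And>u v. E u v \<Longrightarrow> u < n \<and> v < n"
    using assms(3) unfolding simple_graph_def by auto
  obtain c :: "nat \<Rightarrow> bool" where col: "\<And>u v. E u v \<Longrightarrow> c u \<noteq> c v"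
    using assms(4) unfolding bipartite_graph_def by blast
  define B where "B = (k - 1) * (n - k + 1)"
  have kn: "k \<le> n" "n > 0" and "B > 0" using assms(1,2) unfolding B_def by auto
  have B_real: "(real k - 1) * (real n - real k + 1) = real B"
    unfolding B_def by (rule of_nat_mult_diff_eq) (use assms(1) kn(1) in auto)
  have free: "\<not> has_P3_packing {..<n} E k"
    using assms(5) by (simp add: contains_kP3_iff_has_P3_packing)
  have edges: "degree_sum {..<n} E \<le> 2 * B"
    using degree_sum_kP3_free_bipartite[where E = E and c = c and V = "{..<n}", OF col sym assms(1)]
      free assms(2) unfolding B_def by simp
  have upper: "spec_radius n E \<le> sqrt (real B)"
    by (rule spec_radius_le_sqrt_edges[where E = E and c = c, OF sym col kn(2) edges])
  have "spec_radius n E = sqrt (real B) \<longleftrightarrow> is_complete_bipartite (k - 1) (n - k + 1) n E"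
  proof
    assume "spec_radius n E = sqrt (real B)"
    then obtain P where "P \<subseteq> {..<n}" "\<And>u v. E u v \<longleftrightarrow> u \<in> P \<and> v \<in> P \<and> c u \<noteq> c v"
      "card {i \<in> P. c i} * card {i \<in> P. \<not> c i} = (k - 1) * (n - k + 1)"
      using spec_radius_eq_sqrt_edges_imp_complete_bipartite_on[where E = E and c = c,
          OF sym col bnd kn(2) edges \<open>B > 0\<close>] unfolding B_def by blast
    thus "is_complete_bipartite (k - 1) (n - k + 1) n E"
      using kP3_free_complete_bipartite_on[OF assms(1,2) _ _ _ free] by blast
  next
    assume "is_complete_bipartite (k - 1) (n - k + 1) n E"
    with upper show "spec_radius n E = sqrt (real B)"
      using complete_bipartite_le_spec_radius[of "k - 1" "n - k + 1" n E] assms(1) kn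
      unfolding B_def by simp
  qed
  with upper B_real show ?thesis by simp
qed

end
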